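(* Let $((x_1,\hat{y}_1,\hat{\gamma}_1), \dots, (x_T,\hat{y}_T,\hat{\gamma}_T))$ be a sequence of training examples $x_t \in \mathbb{R}^n$ together with label estimates $\hat{y}_t \in \{\pm 1\}$ and margin estimates $\hat{\gamma}_t > 0$, sorted in descending order of the margin estimates, and with $\|x_t\| \leq R$ for all $t \in \{1,\ldots,T\}$. Let $\hat{\gamma}=\min (\hat{\gamma}_1,\dots,\hat{\gamma}_T)=\hat{\gamma}_T$ and $K=\lceil R/\hat{\gamma} \rceil-1$. Suppose there exists a vector $u \in \mathbb{R}^n$ such that $\hat{y}_t \langle u, x_t\rangle \geq \hat{\gamma}$ for all $t$. Suppose the examples are divided into $K$ regions $1,\ldots,K$ such that every example $x_{t}$ in region $k$ satisfies $\hat{y}_{t}\langle x_{t}, u\rangle \geq k\hat{\gamma}$. Run the perceptron algorithm on this sequence (in the given order, with labels $\hat y_t$). Let $\varepsilon_1,\ldots,\varepsilon_K$ denote the number of mistakes made by the perceptron on the examples in each of the $K$ regions, let $\varepsilon=\sum_{k=1}^K \varepsilon_k$ be the total number of mistakes, and let $\varepsilon_s=\sqrt{\frac{1}{K}\sum_{k=1}^K (\varepsilon_k-\varepsilon/K)^2}$ be the standard deviation of $\{\varepsilon_1,\ldots,\varepsilon_K\}$. Then \[ \sqrt{\varepsilon} \leq \frac{R\|u\| + \sqrt{R^2\|u\|^2+\varepsilon_s K(K+1)^2\sqrt{K-1}\,\hat{\gamma}^2}}{\hat{\gamma}(K+1)} . \]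
   Context: The perceptron algorithm on a sequence $(x_1,\hat y_1),\ldots,(x_T,\hat y_T)$ with $x_t\in\mathbb{R}^n$, $\hat y_t\in\{\pm1\}$: start with $w_1 = 0$; at step $t$, predict the label $\mathrm{sign}(\langle w_t, x_t\rangle)$; a mistake occurs at step $t$ if $\hat y_t \langle w_t, x_t\rangle \le 0$, in which case $w_{t+1} = w_t + \hat y_t x_t$; otherwise $w_{t+1} = w_t$. Here $\langle\cdot,\cdot\rangle$ is the Euclidean inner product and $\|\cdot\|$ the Euclidean norm. *)

theory Defs
  imports "HOL-Analysis.Analysis"
begin

text \<open>Perceptron on examples indexed 1..T. perc_w x y t is the weight vector after
processing the first t examples, i.e. w_(t+1) in the paper's notation; perc_w x y 0 = w_1 = 0.\<close>
fun perc_w :: "(nat \<Rightarrow> 'a::real_inner) \<Rightarrow> (nat \<Rightarrow> real) \<Rightarrow> nat \<Rightarrow> 'a" where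
  "perc_w x y 0 = 0"
| "perc_w x y (Suc t) =
     (if y (Suc t) * (perc_w x y t \<bullet> x (Suc t)) \<le> 0
      then perc_w x y t + y (Suc t) *\<^sub>R x (Suc t)
      else perc_w x y t)"

definition perc_mistake :: "(nat \<Rightarrow> 'a::real_inner) \<Rightarrow> (nat \<Rightarrow> real) \<Rightarrow> nat \<Rightarrow> bool" where
  "perc_mistake x y t \<longleftrightarrow> y t * (perc_w x y (t - 1) \<bullet> x t) \<le> 0"

end

theory Submission
  imports Defs
begin

text \<open>On every mistake the perceptron adds \<open>y\<^sub>t x\<^sub>t\<close>, which raises \<open>\<langle>w, u\<rangle>\<close> by at least the
  margin of that example and \<open>\<parallel>w\<parallel>\<^sup>2\<close> by at most \<open>R\<^sup>2\<close>; so if \<open>\<epsilon>\<^sub>k\<close> mistakes fall in region \<open>k\<close>,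
  Cauchy--Schwarz gives \<open>\<gamma> \<Sum>\<^sub>k k \<epsilon>\<^sub>k \<le> R\<parallel>u\<parallel>\<surd>\<epsilon>\<close>. Writing \<open>\<epsilon>\<^sub>k = \<epsilon>/K + d\<^sub>k\<close> with \<open>\<Sum>\<^sub>k d\<^sub>k = 0\<close>,
  the left side is \<open>\<gamma>(\<epsilon>(K+1)/2 + \<Sum>\<^sub>k (k - (K+1)/2) d\<^sub>k)\<close>, and by Cauchy--Schwarz again the
  correction term is at least \<open>-K(K-1)\<epsilon>\<^sub>s/2\<close>. This is a quadratic inequality in \<open>\<surd>\<epsilon>\<close>,
  and the bound is its larger root.\<close>

lemma filter_atLeastAtMost_Suc:
  "{s\<in>{1..Suc t}. P s} =
     (if P (Suc t) then insert (Suc t) {s\<in>{1..t}. P s} else {s\<in>{1..t}. P s})"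
  by (auto simp: le_Suc_eq)

lemma perc_w_Suc_mistake:
  "perc_mistake x y (Suc t) \<Longrightarrow> perc_w x y (Suc t) = perc_w x y t + y (Suc t) *\<^sub>R x (Suc t)"
  by (simp add: perc_mistake_def)

lemma perc_w_Suc_no_mistake:
  "\<not> perc_mistake x y (Suc t) \<Longrightarrow> perc_w x y (Suc t) = perc_w x y t"
  by (simp add: perc_mistake_def)

lemma perc_w_norm_sq_le:
  fixes x :: "nat \<Rightarrow> 'a::real_inner"
  assumes "\<forall>s\<in>{1..t}. y s = 1 \<or> y s = -1"
    and "\<forall>s\<in>{1..t}. norm (x s) \<le> R"
  shows "(norm (perc_w x y t))\<^sup>2 \<le> R\<^sup>2 * card {s\<in>{1..t}. perc_mistake x y s}"
  using assms
proof (induction t)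
  case 0
  then show ?case by simp
next
  case (Suc t)
  then have IH: "(norm (perc_w x y t))\<^sup>2 \<le> R\<^sup>2 * card {s\<in>{1..t}. perc_mistake x y s}"
    by simp
  show ?case
  proof (cases "perc_mistake x y (Suc t)")
    case True
    let ?w = "perc_w x y t" and ?c = "y (Suc t)" and ?v = "x (Suc t)"
    have "?c = 1 \<or> ?c = -1" using Suc.prems(1) by simp
    then have "?c\<^sup>2 = 1" by auto
    moreover have "(norm ?v)\<^sup>2 \<le> R\<^sup>2"
      using Suc.prems(2) by (auto intro: power_mono)
    moreover have "?c * (?w \<bullet> ?v) \<le> 0" using True by (simp add: perc_mistake_def)
    moreover have "(norm (?w + ?c *\<^sub>R ?v))\<^sup>2 = (norm ?w)\<^sup>2 + 2 * (?c * (?w \<bullet> ?v)) + ?c\<^sup>2 * (norm ?v)\<^sup>2"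
      unfolding power2_norm_eq_inner
      by (simp add: inner_add_left inner_add_right inner_commute power2_eq_square algebra_simps)
    ultimately have "(norm (?w + ?c *\<^sub>R ?v))\<^sup>2 \<le> (norm ?w)\<^sup>2 + R\<^sup>2" by simp
    then show ?thesis
      using IH True unfolding perc_w_Suc_mistake[OF True] filter_atLeastAtMost_Suc
      by (simp add: algebra_simps)
  next
    case False
    then show ?thesis
      using IH unfolding perc_w_Suc_no_mistake[OF False] filter_atLeastAtMost_Suc by simp
  qed
qed

lemma perc_w_inner_ge:
  fixes x :: "nat \<Rightarrow> 'a::real_inner"
  assumes "\<forall>s\<in>{1..t}. y s * (x s \<bullet> u) \<ge> r s"
  shows "(\<Sum>s\<in>{s\<in>{1..t}. perc_mistake x y s}. r s) \<le> perc_w x y t \<bullet> u"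
  using assms
proof (induction t)
  case 0
  then show ?case by simp
next
  case (Suc t)
  then have IH: "(\<Sum>s\<in>{s\<in>{1..t}. perc_mistake x y s}. r s) \<le> perc_w x y t \<bullet> u"
    by simp
  show ?case
  proof (cases "perc_mistake x y (Suc t)")
    case True
    have "r (Suc t) \<le> y (Suc t) * (x (Suc t) \<bullet> u)" using Suc.prems by simp
    then show ?thesis
      using IH True unfolding perc_w_Suc_mistake[OF True] filter_atLeastAtMost_Suc
      by (simp add: inner_add_left)
  next
    case False
    then show ?thesis
      using IH unfolding perc_w_Suc_no_mistake[OF False] filter_atLeastAtMost_Suc by simp
  qed
qed

lemma perc_mistake_margin_sum_le:
  fixes x :: "nat \<Rightarrow> 'a::real_inner"
  assumes labels: "\<forall>s\<in>{1..T}. y s = 1 \<or> y s = -1"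
    and bounded: "\<forall>s\<in>{1..T}. norm (x s) \<le> R" and "R \<ge> 0"
    and margin: "\<forall>s\<in>{1..T}. y s * (x s \<bullet> u) \<ge> r s"
  shows "(\<Sum>s\<in>{s\<in>{1..T}. perc_mistake x y s}. r s)
           \<le> R * sqrt (card {s\<in>{1..T}. perc_mistake x y s}) * norm u"
proof -
  let ?w = "perc_w x y T" and ?n = "real (card {s\<in>{1..T}. perc_mistake x y s})"
  have "(norm ?w)\<^sup>2 \<le> (R * sqrt ?n)\<^sup>2"
    using perc_w_norm_sq_le[OF labels bounded] by (simp add: power_mult_distrib)
  then have norm_w: "norm ?w \<le> R * sqrt ?n"
    by (rule power2_le_imp_le) (use \<open>R \<ge> 0\<close> in simp)
  have "(\<Sum>s\<in>{s\<in>{1..T}. perc_mistake x y s}. r s) \<le> ?w \<bullet> u"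
    by (rule perc_w_inner_ge[OF margin])
  also have "\<dots> \<le> norm ?w * norm u" by (rule norm_cauchy_schwarz)
  also have "\<dots> \<le> R * sqrt ?n * norm u" using norm_w by (simp add: mult_right_mono)
  finally show ?thesis .
qed

lemma sum_mult_card_fibres:
  assumes "finite A" "finite B" "g ` A \<subseteq> B"
  shows "(\<Sum>k\<in>B. f k * real (card {t\<in>A. g t = k})) = (\<Sum>t\<in>A. f (g t))"
proof -
  have "(\<Sum>k\<in>B. f k * real (card {t\<in>A. g t = k})) = (\<Sum>k\<in>B. \<Sum>t\<in>{t\<in>A. g t = k}. f (g t))"
    by (intro sum.cong) auto
  also have "\<dots> = (\<Sum>t\<in>A. f (g t))" using assms by (rule sum.group)
  finally show ?thesis .
qed

lemma sum_sq_dist_midpoint_le: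
  "(\<Sum>k=1..K. (real k - (real K + 1) / 2)\<^sup>2) \<le> real K * ((real K - 1) / 2)\<^sup>2"
proof -
  have "(real k - (real K + 1) / 2)\<^sup>2 \<le> ((real K - 1) / 2)\<^sup>2" if "k \<in> {1..K}" for k
  proof -
    have "1 \<le> real k" "real k \<le> real K" using that by auto
    then have "\<bar>real k - (real K + 1) / 2\<bar> \<le> (real K - 1) / 2"
      unfolding abs_le_iff by (auto simp: field_simps)
    then show ?thesis by (metis abs_ge_zero order_trans power2_abs power_mono)
  qed
  then have "(\<Sum>k=1..K. (real k - (real K + 1) / 2)\<^sup>2) \<le> (\<Sum>k=1..K. ((real K - 1) / 2)\<^sup>2)"
    by (rule sum_mono)
  then show ?thesis by simp
qed

lemma index_weighted_sum_ge:
  fixes e :: "nat \<Rightarrow> real"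
  assumes "K \<ge> 1"
  defines "\<epsilon> \<equiv> \<Sum>k=1..K. e k"
  defines "\<sigma> \<equiv> sqrt ((1 / real K) * (\<Sum>k=1..K. (e k - \<epsilon> / real K)\<^sup>2))"
  shows "\<epsilon> * (real K + 1) - real K * (real K - 1) * \<sigma> \<le> 2 * (\<Sum>k=1..K. real k * e k)"
proof -
  define m where "m = (real K + 1) / 2"
  define d where "d k = e k - \<epsilon> / real K" for k
  have K: "real K \<ge> 1" using assms(1) by simp
  have sum_d: "(\<Sum>k=1..K. d k) = 0"
    unfolding d_def sum_subtractf \<epsilon>_def using K by simp
  have sum_k: "(\<Sum>k=1..K. real k) = real K * (real K + 1) / 2"
    using double_gauss_sum_from_Suc_0[of K, where ?'a=real] by simp
  have split: "(\<Sum>k=1..K. real k * e k) = \<epsilon> * (real K + 1) / 2 + (\<Sum>k=1..K. (real k - m) * d k)"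
  proof -
    have "(\<Sum>k=1..K. real k * e k) = (\<Sum>k=1..K. real k * (\<epsilon> / real K) + (real k - m) * d k + m * d k)"
      unfolding d_def using K by (intro sum.cong) (auto simp: field_simps)
    also have "\<dots> = (\<Sum>k=1..K. real k) * (\<epsilon> / real K) + (\<Sum>k=1..K. (real k - m) * d k)
                      + m * (\<Sum>k=1..K. d k)"
      by (simp add: sum.distrib sum_distrib_left sum_distrib_right sum_divide_distrib)
    also have "\<dots> = \<epsilon> * (real K + 1) / 2 + (\<Sum>k=1..K. (real k - m) * d k)"
      using sum_d sum_k K by (simp add: field_simps)
    finally show ?thesis .
  qed
  have sum_d_sq: "(\<Sum>k=1..K. (d k)\<^sup>2) = real K * \<sigma>\<^sup>2"
    using K unfolding \<sigma>_def d_def by (simp add: sum_nonneg field_simps)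
  have "\<sigma> \<ge> 0"
    unfolding \<sigma>_def by (intro real_sqrt_ge_zero mult_nonneg_nonneg sum_nonneg) auto
  have "(\<Sum>k=1..K. (real k - m) * d k)\<^sup>2 \<le> (\<Sum>k=1..K. (real k - m)\<^sup>2) * (\<Sum>k=1..K. (d k)\<^sup>2)"
    by (rule Cauchy_Schwarz_ineq_sum)
  also have "\<dots> \<le> real K * ((real K - 1) / 2)\<^sup>2 * (real K * \<sigma>\<^sup>2)"
    unfolding sum_d_sq m_def by (intro mult_right_mono sum_sq_dist_midpoint_le) auto
  also have "\<dots> = (real K * (real K - 1) / 2 * \<sigma>)\<^sup>2"
    by (simp add: power2_eq_square field_simps)
  finally have "\<bar>\<Sum>k=1..K. (real k - m) * d k\<bar>\<^sup>2 \<le> (real K * (real K - 1) / 2 * \<sigma>)\<^sup>2"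
    by (simp only: power2_abs)
  then have "\<bar>\<Sum>k=1..K. (real k - m) * d k\<bar> \<le> real K * (real K - 1) / 2 * \<sigma>"
    by (rule power2_le_imp_le) (use K \<open>\<sigma> \<ge> 0\<close> in simp)
  then have "- (\<Sum>k=1..K. (real k - m) * d k) \<le> real K * (real K - 1) / 2 * \<sigma>"
    by (rule abs_le_D2)
  then show ?thesis unfolding split by (simp add: field_simps)
qed

lemma le_quadratic_root:
  fixes z b c :: real
  assumes "z\<^sup>2 \<le> 2 * b * z + c"
  shows "z \<le> b + sqrt (b\<^sup>2 + c)"
proof -
  have "(z - b)\<^sup>2 \<le> b\<^sup>2 + c" using assms by (simp add: power2_diff algebra_simps)
  then have "z - b \<le> sqrt (b\<^sup>2 + c)" by (rule real_le_rsqrt)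
  then show ?thesis by simp
qed

lemma le_plus_two_mult_sqrt:
  fixes a :: real
  assumes "a \<ge> 0"
  shows "a \<le> (a + 2) * sqrt a"
proof -
  have "sqrt a \<le> sqrt ((a + 2)\<^sup>2)"
    using assms by (intro real_sqrt_le_mono) (simp add: power2_eq_square algebra_simps)
  then have "sqrt a \<le> a + 2" using assms by simp
  then have "sqrt a * sqrt a \<le> (a + 2) * sqrt a" using assms by (intro mult_right_mono) auto
  then show ?thesis using assms by simp
qed

text \<open>The purely arithmetic part of the theorem: \<open>S\<close> stands for \<open>\<Sum>\<^sub>k k \<epsilon>\<^sub>k\<close>, \<open>b\<close> for \<open>R\<parallel>u\<parallel>\<close>.\<close>

lemma sqrt_mistakes_le:
  fixes \<gamma> \<epsilon> \<sigma> S b :: real and K :: nat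
  assumes "\<gamma> > 0" "K \<ge> 1" "\<epsilon> \<ge> 0" "\<sigma> \<ge> 0"
    and upper: "S * \<gamma> \<le> b * sqrt \<epsilon>"
    and lower: "\<epsilon> * (real K + 1) - real K * (real K - 1) * \<sigma> \<le> 2 * S"
  shows "sqrt \<epsilon> \<le> (b + sqrt (b\<^sup>2 + \<sigma> * real K * (real K + 1)\<^sup>2 * sqrt (real K - 1) * \<gamma>\<^sup>2))
                    / (\<gamma> * (real K + 1))"
proof -
  let ?c = "\<gamma> * (real K + 1)"
  let ?E = "\<gamma>\<^sup>2 * (real K + 1) * (real K * (real K - 1) * \<sigma>)"
  have c: "?c > 0" using assms(1) by simp
  have "(?c * sqrt \<epsilon>)\<^sup>2 = \<gamma>\<^sup>2 * (real K + 1) * (\<epsilon> * (real K + 1))"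
    using \<open>\<epsilon> \<ge> 0\<close> by (simp add: power2_eq_square)
  also have "\<dots> \<le> \<gamma>\<^sup>2 * (real K + 1) * (2 * S) + ?E"
    using lower by (simp add: mult_left_mono flip: distrib_left)
  also have "\<dots> = 2 * (?c * (S * \<gamma>)) + ?E" by (simp add: power2_eq_square)
  also have "\<dots> \<le> 2 * (?c * (b * sqrt \<epsilon>)) + ?E"
    using upper c by (intro add_right_mono mult_left_mono) auto
  also have "\<dots> = 2 * b * (?c * sqrt \<epsilon>) + ?E" by (simp only: mult_ac)
  finally have root: "?c * sqrt \<epsilon> \<le> b + sqrt (b\<^sup>2 + ?E)" by (rule le_quadratic_root)
  have "?E \<le> \<sigma> * real K * (real K + 1)\<^sup>2 * sqrt (real K - 1) * \<gamma>\<^sup>2"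
  proof -
    have "real K - 1 \<le> (real K + 1) * sqrt (real K - 1)"
      using le_plus_two_mult_sqrt[of "real K - 1"] assms(2) by (simp add: ac_simps)
    then have "(\<gamma>\<^sup>2 * (real K + 1) * real K * \<sigma>) * (real K - 1)
             \<le> (\<gamma>\<^sup>2 * (real K + 1) * real K * \<sigma>) * ((real K + 1) * sqrt (real K - 1))"
      using assms(4) by (intro mult_left_mono) auto
    then show ?thesis by (simp add: power2_eq_square algebra_simps)
  qed
  then have "sqrt (b\<^sup>2 + ?E) \<le> sqrt (b\<^sup>2 + \<sigma> * real K * (real K + 1)\<^sup>2 * sqrt (real K - 1) * \<gamma>\<^sup>2)"
    by (intro real_sqrt_le_mono add_left_mono)
  with root have "sqrt \<epsilon> * ?c \<le> b + sqrt (b\<^sup>2 + \<sigma> * real K * (real K + 1)\<^sup>2 * sqrt (real K - 1) * \<gamma>\<^sup>2)"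
    by (simp only: mult.commute[of "sqrt \<epsilon>"])
  then show ?thesis by (subst pos_le_divide_eq[OF c])
qed

theorem theorem2:
  fixes x :: "nat \<Rightarrow> 'a::euclidean_space"
    and y :: "nat \<Rightarrow> real" and gam :: "nat \<Rightarrow> real"
    and T :: nat and R :: real and u :: 'a
    and reg :: "nat \<Rightarrow> nat"
    and \<gamma> :: real and K :: nat
    and eps :: "nat \<Rightarrow> real" and \<epsilon> :: real and \<epsilon>s :: real
  assumes T_pos: "T \<ge> 1"
    and labels: "\<forall>t\<in>{1..T}. y t = 1 \<or> y t = -1"
    and margins_pos: "\<forall>t\<in>{1..T}. gam t > 0"
    and sorted: "\<forall>s\<in>{1..T}. \<forall>t\<in>{1..T}. s \<le> t \<longrightarrow> gam t \<le> gam s"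
    and bounded: "\<forall>t\<in>{1..T}. norm (x t) \<le> R"
    and gamma_def: "\<gamma> = Min (gam ` {1..T})"
    and K_def: "K = nat (\<lceil>R / \<gamma>\<rceil> - 1)"
    and separable: "\<forall>t\<in>{1..T}. y t * (u \<bullet> x t) \<ge> \<gamma>"
    and regions: "\<forall>t\<in>{1..T}. reg t \<in> {1..K}"
    and region_margin: "\<forall>t\<in>{1..T}. y t * (x t \<bullet> u) \<ge> real (reg t) * \<gamma>"
    and eps_def: "\<forall>k. eps k = real (card {t\<in>{1..T}. reg t = k \<and> perc_mistake x y t})"
    and total_def: "\<epsilon> = (\<Sum>k=1..K. eps k)"
    and std_def: "\<epsilon>s = sqrt ((1 / real K) * (\<Sum>k=1..K. (eps k - \<epsilon> / real K)^2))"
  shows "sqrt \<epsilon> \<le> (R * norm u + sqrt (R^2 * (norm u)^2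
            + \<epsilon>s * real K * (real K + 1)^2 * sqrt (real K - 1) * \<gamma>^2))
          / (\<gamma> * (real K + 1))"
proof -
  define M where "M = {s\<in>{1..T}. perc_mistake x y s}"
  have "1 \<in> {1..T}" using T_pos by simp
  then have "reg 1 \<in> {1..K}" and "norm (x 1) \<le> R" using regions bounded by blast+
  then have K: "K \<ge> 1" and "R \<ge> 0" by (auto intro: order_trans[OF norm_ge_zero])
  have "\<gamma> > 0" unfolding gamma_def using T_pos margins_pos by (subst Min_gr_iff) auto
  have eps_card: "eps k = real (card {t\<in>M. reg t = k})" for k
  proof -
    have "{t\<in>{1..T}. reg t = k \<and> perc_mistake x y t} = {t\<in>M. reg t = k}"
      unfolding M_def by blast
    then show ?thesis using eps_def by simp
  qed
  have fibres: "(\<Sum>k=1..K. f k * eps k) = (\<Sum>t\<in>M. f (reg t))" for f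
    unfolding eps_card using regions by (intro sum_mult_card_fibres) (auto simp: M_def)
  have card_M: "\<epsilon> = card M" using fibres[of "\<lambda>_. 1"] total_def by simp
  have "(\<Sum>k=1..K. real k * eps k) * \<gamma> = (\<Sum>k=1..K. (real k * \<gamma>) * eps k)"
    unfolding sum_distrib_right by (rule sum.cong) simp_all
  also have "\<dots> = (\<Sum>s\<in>M. real (reg s) * \<gamma>)" by (rule fibres)
  also have "\<dots> \<le> R * sqrt (card M) * norm u"
    using perc_mistake_margin_sum_le[OF labels bounded \<open>R \<ge> 0\<close> region_margin]
    unfolding M_def .
  finally have upper: "(\<Sum>k=1..K. real k * eps k) * \<gamma> \<le> R * norm u * sqrt \<epsilon>"
    by (simp add: card_M mult_ac)
  have lower: "\<epsilon> * (real K + 1) - real K * (real K - 1) * \<epsilon>s \<le> 2 * (\<Sum>k=1..K. real k * eps k)"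
    using index_weighted_sum_ge[OF K, of eps] unfolding std_def total_def .
  have "\<epsilon> \<ge> 0" and "\<epsilon>s \<ge> 0"
    unfolding card_M std_def by (auto intro!: real_sqrt_ge_zero divide_nonneg_nonneg sum_nonneg)
  from sqrt_mistakes_le[OF \<open>\<gamma> > 0\<close> K this upper lower] show ?thesis
    by (simp add: power_mult_distrib)
qed

end
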